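(* Let $\{\widehat{\mathcal G}_N\}_N$ be a family of directed acyclic graphs on node sets $\{1,\dots,N\}$ with bounded diameter, in which the reference node $N$ is a common ancestor of all nodes, and let $\mathbf H,\mathbf M$ be the associated matrices defined in the context. Then the condition $$\limsup_{N\to\infty}\ \sup_{\mathbf A:\|\mathbf A\|_\infty\le1}\ \|\mathbf M^{-1}(\mathbf H\odot\mathbf A)\mathbf 1\|_\infty<\infty$$ is satisfied if one of the following three conditions is met: (i) all paths from any node to the reference node have bounded length; (ii) $\sup_i\rho_i^-<\infty$; (iii) a fraction bounded away from $0$ of the in-neighbors of any node is $(\tau,h)$-proximal to the reference node, for some $\tau>0$ and $h<\infty$.
   Context: For a directed graph on $\{1,\dots,N\}$, $\mathcal N_i^-$ denotes the set of in-neighbors of node $i$ and $\rho_i^-=|\mathcal N_i^-|$. In this directed setting the least-squares quality estimates are defined by $\widehat q_N=0$ and $\widehat q_i=\sum_{j\in\mathcal N_i^-}\frac{\widehat q_j+\widehat d_{i,j}}{\rho_i^-}$ for $i<N$; correspondingly $[\mathbf H]_{i,j}=1/\rho_i^-$ if $i<N$ and $j\in\mathcal N_i^-$, and $[\mathbf H]_{i,j}=0$ otherwise, and $\mathbf M=\mathbf I-\mathbf H$, so that $\widehat{\mathbf q}=\mathbf M^{-1}(\mathbf H\odot\widehat{\mathbf D})\mathbf 1$. Here $\odot$ is the Hadamard product, $\mathbf 1$ the all-ones vector, $\mathbf A=\{a_{i,j}\}$ ranges over real $N\times N$ matrices with $\|\mathbf A\|_\infty=\sup_{i,j}|a_{i,j}|$,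 and $\|\cdot\|_\infty$ of a vector is its maximum absolute entry. The random walk on such a graph starting at node $i$ moves from the current node $u$ to a uniformly random node of $\mathcal N_u^-$ and stops upon hitting node $N$. Definition: given a family of graphs $\{\mathcal G_N\}_N$, a node $i$ is proximal to the reference node $N$ with parameters $(\tau,h)$ if the random walk starting from $i$ reaches $N$ within $h$ hops with a probability that is asymptotically (in $N$) bounded below by $\tau$. *)

theory Defs
  imports "Jordan_Normal_Form.Matrix" "HOL-Library.Extended_Real" "HOL-Library.Liminf_Limsup"
begin

text \<open>A directed graph on nodes 1..N is given by an edge predicate E, where
  E j i means there is a directed edge from j to i (so j is an in-neighbor of i).\<close>

definition in_nbrs :: "(nat \<Rightarrow> nat \<Rightarrow> bool) \<Rightarrow> nat \<Rightarrow> nat set" where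
  "in_nbrs E i = {j. E j i}"

definition rho_in :: "(nat \<Rightarrow> nat \<Rightarrow> bool) \<Rightarrow> nat \<Rightarrow> nat" where
  "rho_in E i = card (in_nbrs E i)"

definition digraph_on :: "nat \<Rightarrow> (nat \<Rightarrow> nat \<Rightarrow> bool) \<Rightarrow> bool" where
  "digraph_on N E \<longleftrightarrow> (\<forall>j i. E j i \<longrightarrow> j \<in> {1..N} \<and> i \<in> {1..N})"

definition acyclic_graph :: "(nat \<Rightarrow> nat \<Rightarrow> bool) \<Rightarrow> bool" where
  "acyclic_graph E \<longleftrightarrow> (\<forall>v. \<not> E\<^sup>+\<^sup>+ v v)"

text \<open>A directed walk: a nonempty list of nodes with consecutive edges;
  its length (number of hops) is length xs - 1.\<close>
definition dwalk :: "(nat \<Rightarrow> nat \<Rightarrow> bool) \<Rightarrow> nat list \<Rightarrow> bool" where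
  "dwalk E xs \<longleftrightarrow> xs \<noteq> [] \<and> (\<forall>k. Suc k < length xs \<longrightarrow> E (xs ! k) (xs ! Suc k))"

definition diam_le :: "(nat \<Rightarrow> nat \<Rightarrow> bool) \<Rightarrow> nat \<Rightarrow> bool" where
  "diam_le E D \<longleftrightarrow> (\<forall>u v. E\<^sup>*\<^sup>* u v \<longrightarrow>
     (\<exists>xs. dwalk E xs \<and> hd xs = u \<and> last xs = v \<and> length xs \<le> Suc D))"

text \<open>Probability that the random walk (moving from u to a uniformly random
  in-neighbor of u, stopping at the reference node N) started at i reaches N
  within h hops.\<close>
fun reach_prob :: "nat \<Rightarrow> (nat \<Rightarrow> nat \<Rightarrow> bool) \<Rightarrow> nat \<Rightarrow> nat \<Rightarrow> real" where
  "reach_prob N E 0 i = (if i = N then 1 else 0)"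
| "reach_prob N E (Suc h) i =
     (if i = N then 1
      else if rho_in E i = 0 then 0
      else (\<Sum>j\<in>in_nbrs E i. reach_prob N E h j) / real (rho_in E i))"

text \<open>Matrices (0-based JNF indices: row/column index k corresponds to node k+1).\<close>
definition H_mat :: "nat \<Rightarrow> (nat \<Rightarrow> nat \<Rightarrow> bool) \<Rightarrow> real mat" where
  "H_mat N E = mat N N (\<lambda>(i, j).
     if Suc i < N \<and> Suc j \<in> in_nbrs E (Suc i) then 1 / real (rho_in E (Suc i)) else 0)"

definition M_mat :: "nat \<Rightarrow> (nat \<Rightarrow> nat \<Rightarrow> bool) \<Rightarrow> real mat" where
  "M_mat N E = 1\<^sub>m N - H_mat N E"

definition mat_inv :: "nat \<Rightarrow> real mat \<Rightarrow> real mat" where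
  "mat_inv n A = (THE B. B \<in> carrier_mat n n \<and> A * B = 1\<^sub>m n \<and> B * A = 1\<^sub>m n)"

definition hadamard :: "real mat \<Rightarrow> real mat \<Rightarrow> real mat" where
  "hadamard A B = mat (dim_row A) (dim_col A) (\<lambda>ij. A $$ ij * B $$ ij)"

definition vec_sup_norm :: "real vec \<Rightarrow> real" where
  "vec_sup_norm v = Max (insert 0 {\<bar>v $ i\<bar> | i. i < dim_vec v})"

definition mat_sup_entry :: "real mat \<Rightarrow> real" where
  "mat_sup_entry A = Max (insert 0 {\<bar>A $$ (i, j)\<bar> | i j. i < dim_row A \<and> j < dim_col A})"

definition sens :: "nat \<Rightarrow> (nat \<Rightarrow> nat \<Rightarrow> bool) \<Rightarrow> ereal" where
  "sens N E = (SUP A \<in> {A. A \<in> carrier_mat N N \<and> mat_sup_entry A \<le> 1}.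
      ereal (vec_sup_norm (mat_inv N (M_mat N E) *\<^sub>v (hadamard (H_mat N E) A *\<^sub>v vec N (\<lambda>_. 1)))))"

end

theory Submission
  imports Defs "Jordan_Normal_Form.Determinant"
begin

text \<open>Let \<open>T\<close> average a function over the in-neighbours of each node (and vanish at \<open>N\<close>),
  so that \<open>H\<close> acts as \<open>T\<close>. If \<open>M q = b\<close> with \<open>\<bar>b\<bar> \<le> \<beta>\<close> entrywise, then
  \<open>\<bar>q\<bar> \<le> T \<bar>q\<bar> + \<beta>\<close>, and iterating \<open>h + 1\<close> times gives
  \<open>\<bar>q\<bar> \<le> T\<^sup>h\<^sup>+\<^sup>1 \<bar>q\<bar> + (h + 1) \<beta>\<close>. Now \<open>T\<^sup>h\<^sup>+\<^sup>1 1\<close> is at most one minus the probability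
  that the random walk reaches \<open>N\<close> within \<open>h\<close> hops; if that probability is at least
  \<open>p > 0\<close> from every node, the maximum of \<open>\<bar>q\<bar>\<close> is at most \<open>(h + 1) \<beta> / p\<close>.
  With \<open>\<beta> = 0\<close> this shows that \<open>M\<close> is invertible, with \<open>\<beta> = 1\<close> it bounds the
  sensitivity uniformly in \<open>N\<close>. Each condition provides such \<open>h\<close> and \<open>p\<close> for large \<open>N\<close>:
  (i) \<open>p = 1\<close>, since the walk cannot outlast the longest path from \<open>N\<close>;
  (ii) \<open>p = C\<^sup>-\<^sup>D\<close>, by following a shortest path from \<open>N\<close> backwards;
  (iii) \<open>p = min (c \<tau>) 1\<close> after one more hop.\<close>

text \<open>The action of \<open>H\<close> on functions of the nodes. At a node without in-neighbours the
  division by zero gives 0, matching the zero row of \<open>H\<close>.\<close>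

definition nbr_avg :: "nat \<Rightarrow> (nat \<Rightarrow> nat \<Rightarrow> bool) \<Rightarrow> (nat \<Rightarrow> real) \<Rightarrow> nat \<Rightarrow> real" where
  "nbr_avg N E g i = (if i = N then 0 else (\<Sum>j\<in>in_nbrs E i. g j) / real (rho_in E i))"

definition uniformly_proximal :: "nat \<Rightarrow> (nat \<Rightarrow> nat \<Rightarrow> bool) \<Rightarrow> nat \<Rightarrow> real \<Rightarrow> bool" where
  "uniformly_proximal N E h p \<longleftrightarrow> (\<forall>i\<in>{1..N}. p \<le> reach_prob N E h i)"

lemma in_nbrs_subset: "digraph_on N E \<Longrightarrow> in_nbrs E i \<subseteq> {1..N}"
  unfolding digraph_on_def in_nbrs_def by auto

lemma finite_in_nbrs: "digraph_on N E \<Longrightarrow> finite (in_nbrs E i)"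
  by (rule finite_subset[OF in_nbrs_subset finite_atLeastAtMost])

lemma rho_in_pos: "digraph_on N E \<Longrightarrow> E j i \<Longrightarrow> 0 < rho_in E i"
  unfolding rho_in_def using finite_in_nbrs[of N E i] by (auto simp: card_gt_0_iff in_nbrs_def)

lemma rho_in_pos_if_ancestor:
  assumes "digraph_on N E" "E\<^sup>*\<^sup>* N i" "i \<noteq> N"
  shows "0 < rho_in E i"
proof -
  obtain j where "E j i"
    using assms(2,3) by (cases rule: rtranclp.cases) blast+
  then show ?thesis by (rule rho_in_pos[OF assms(1)])
qed

lemma reach_prob_nonneg: "0 \<le> reach_prob N E h i"
  by (induction h arbitrary: i) (auto intro!: divide_nonneg_nonneg sum_nonneg)

lemma reach_prob_Suc_eq_nbr_avg:
  "i \<noteq> N \<Longrightarrow> reach_prob N E (Suc h) i = nbr_avg N E (reach_prob N E h) i"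
  unfolding nbr_avg_def by simp

lemma nbr_avg_mono:
  "(\<And>j. j \<in> in_nbrs E i \<Longrightarrow> g j \<le> g' j) \<Longrightarrow> nbr_avg N E g i \<le> nbr_avg N E g' i"
  unfolding nbr_avg_def by (auto intro!: divide_right_mono sum_mono)

lemma nbr_avg_const: "i \<noteq> N \<Longrightarrow> 0 < rho_in E i \<Longrightarrow> nbr_avg N E (\<lambda>_. c) i = c"
  unfolding nbr_avg_def rho_in_def by simp

lemma nbr_avg_const_le: "0 \<le> c \<Longrightarrow> nbr_avg N E (\<lambda>_. c) i \<le> c"
  unfolding nbr_avg_def rho_in_def by (cases "card (in_nbrs E i) = 0") auto

lemma nbr_avg_scale: "nbr_avg N E (\<lambda>j. c * g j) i = c * nbr_avg N E g i"
  unfolding nbr_avg_def by (simp add: sum_distrib_left)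

lemma nbr_avg_add: "nbr_avg N E (\<lambda>j. g j + g' j) i = nbr_avg N E g i + nbr_avg N E g' i"
  unfolding nbr_avg_def by (simp add: sum.distrib add_divide_distrib)

lemma abs_nbr_avg_le: "\<bar>nbr_avg N E g i\<bar> \<le> nbr_avg N E (\<lambda>j. \<bar>g j\<bar>) i"
  unfolding nbr_avg_def by (auto simp: abs_div_pos intro!: divide_right_mono)

lemma funpow_nbr_avg_mono:
  assumes dg: "digraph_on N E" and le: "\<And>j. j \<in> {1..N} \<Longrightarrow> g j \<le> g' j"
  shows "i \<in> {1..N} \<Longrightarrow> (nbr_avg N E ^^ k) g i \<le> (nbr_avg N E ^^ k) g' i"
proof (induction k arbitrary: i)
  case (Suc k)
  have "nbr_avg N E ((nbr_avg N E ^^ k) g) i \<le> nbr_avg N E ((nbr_avg N E ^^ k) g') i"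
  proof (rule nbr_avg_mono)
    fix j assume "j \<in> in_nbrs E i"
    then have "j \<in> {1..N}" using in_nbrs_subset[OF dg] by blast
    then show "(nbr_avg N E ^^ k) g j \<le> (nbr_avg N E ^^ k) g' j" by (rule Suc.IH)
  qed
  then show ?case by simp
qed (use le in simp)

lemma funpow_nbr_avg_scale:
  "(nbr_avg N E ^^ k) (\<lambda>j. c * g j) = (\<lambda>j. c * (nbr_avg N E ^^ k) g j)"
  by (induction k) (auto simp: nbr_avg_scale)

text \<open>\<open>(nbr_avg N E ^^ k) (\<lambda>_. 1) i\<close> is the probability that the walk from \<open>i\<close> makes
  \<open>k\<close> steps without being absorbed at \<open>N\<close> or getting stuck.\<close>

lemma funpow_nbr_avg_one_add_reach_prob_le:
  "(nbr_avg N E ^^ Suc h) (\<lambda>_. 1) i + reach_prob N E h i \<le> 1"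
proof (induction h arbitrary: i)
  case 0
  show ?case
    using nbr_avg_const_le[of 1 N E i] by (cases "i = N") (simp_all add: nbr_avg_def)
next
  case (Suc h)
  show ?case
  proof (cases "i = N")
    case True
    then show ?thesis by (simp add: nbr_avg_def)
  next
    case False
    have "(nbr_avg N E ^^ Suc (Suc h)) (\<lambda>_. 1) i + reach_prob N E (Suc h) i
        = nbr_avg N E (\<lambda>j. (nbr_avg N E ^^ Suc h) (\<lambda>_. 1) j + reach_prob N E h j) i"
      by (simp only: funpow.simps comp_apply reach_prob_Suc_eq_nbr_avg[OF False] nbr_avg_add)
    also have "\<dots> \<le> nbr_avg N E (\<lambda>_. 1) i"
      by (rule nbr_avg_mono) (rule Suc.IH)
    also have "\<dots> \<le> 1"
      by (rule nbr_avg_const_le) simp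
    finally show ?thesis .
  qed
qed

lemma le_funpow_nbr_avg_if_subsolution:
  assumes dg: "digraph_on N E" and beta: "0 \<le> \<beta>"
    and sub: "\<And>i. i \<in> {1..N} \<Longrightarrow> g i \<le> nbr_avg N E g i + \<beta>"
  shows "i \<in> {1..N} \<Longrightarrow> g i \<le> (nbr_avg N E ^^ k) g i + real k * \<beta>"
proof (induction k arbitrary: i)
  case (Suc k)
  have "g i \<le> nbr_avg N E g i + \<beta>"
    using sub Suc.prems .
  also have "nbr_avg N E g i \<le> nbr_avg N E (\<lambda>j. (nbr_avg N E ^^ k) g j + real k * \<beta>) i"
  proof (rule nbr_avg_mono)
    fix j assume "j \<in> in_nbrs E i"
    then have "j \<in> {1..N}" using in_nbrs_subset[OF dg] by blast
    then show "g j \<le> (nbr_avg N E ^^ k) g j + real k * \<beta>" by (rule Suc.IH)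
  qed
  also have "\<dots> = (nbr_avg N E ^^ Suc k) g i + nbr_avg N E (\<lambda>_. real k * \<beta>) i"
    by (simp add: nbr_avg_add)
  also have "nbr_avg N E (\<lambda>_. real k * \<beta>) i \<le> real k * \<beta>"
    using beta by (intro nbr_avg_const_le) simp
  finally show ?case by (simp add: algebra_simps)
qed simp

lemma subsolution_le_if_uniformly_proximal:
  assumes dg: "digraph_on N E" and p: "0 < p" and prox: "uniformly_proximal N E h p"
    and nonneg: "\<And>i. i \<in> {1..N} \<Longrightarrow> 0 \<le> g i"
    and sub: "\<And>i. i \<in> {1..N} \<Longrightarrow> g i \<le> nbr_avg N E g i + \<beta>" and beta: "0 \<le> \<beta>"
    and i: "i \<in> {1..N}"
  shows "g i \<le> real (Suc h) * \<beta> / p"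
proof -
  define m where "m = Max (g ` {1..N})"
  have le_m: "g j \<le> m" if "j \<in> {1..N}" for j
    unfolding m_def using that by auto
  have "m \<in> g ` {1..N}"
    unfolding m_def using i by (intro Max_in) auto
  then obtain i0 where i0: "i0 \<in> {1..N}" "g i0 = m" by auto
  have m_nonneg: "0 \<le> m" using nonneg[OF i0(1)] i0(2) by simp
  have "m \<le> (nbr_avg N E ^^ Suc h) g i0 + real (Suc h) * \<beta>"
    unfolding i0(2)[symmetric] by (rule le_funpow_nbr_avg_if_subsolution[OF dg beta sub i0(1)])
  also have "(nbr_avg N E ^^ Suc h) g i0 \<le> (nbr_avg N E ^^ Suc h) (\<lambda>_. m * 1) i0"
    using le_m by (intro funpow_nbr_avg_mono[OF dg _ i0(1)]) simp
  also have "\<dots> = m * (nbr_avg N E ^^ Suc h) (\<lambda>_. 1) i0"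
    by (simp only: funpow_nbr_avg_scale)
  also have "\<dots> \<le> m * (1 - p)"
  proof (rule mult_left_mono[OF _ m_nonneg])
    have "p \<le> reach_prob N E h i0"
      using prox i0(1) unfolding uniformly_proximal_def by blast
    then show "(nbr_avg N E ^^ Suc h) (\<lambda>_. 1) i0 \<le> 1 - p"
      using funpow_nbr_avg_one_add_reach_prob_le[where N = N and E = E and h = h and i = i0]
      by linarith
  qed
  finally have "m * p \<le> real (Suc h) * \<beta>"
    by (simp add: algebra_simps)
  then have "m \<le> real (Suc h) * \<beta> / p"
    using p by (simp add: pos_le_divide_eq)
  then show ?thesis using le_m[OF i] by linarith
qed

lemma H_mat_carrier: "H_mat N E \<in> carrier_mat N N"
  unfolding H_mat_def by simp

lemma M_mat_carrier: "M_mat N E \<in> carrier_mat N N"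
  unfolding M_mat_def by (rule minus_carrier_mat[OF H_mat_carrier])

lemma in_nbrs_eq_image_Suc:
  assumes dg: "digraph_on N E"
  shows "in_nbrs E k = Suc ` {j \<in> {0..<N}. Suc j \<in> in_nbrs E k}"
proof
  show "in_nbrs E k \<subseteq> Suc ` {j \<in> {0..<N}. Suc j \<in> in_nbrs E k}"
  proof
    fix x assume x: "x \<in> in_nbrs E k"
    then have "x \<in> {1..N}" using in_nbrs_subset[OF dg] by blast
    then have "x = Suc (x - 1)" "x - 1 \<in> {0..<N}" by auto
    then show "x \<in> Suc ` {j \<in> {0..<N}. Suc j \<in> in_nbrs E k}"
      using x by (intro image_eqI[of x Suc "x - 1"]) auto
  qed
qed auto

lemma H_mat_mult_vec_nth:
  assumes dg: "digraph_on N E" and v: "v \<in> carrier_vec N" and i: "i < N"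
  shows "(H_mat N E *\<^sub>v v) $ i = nbr_avg N E (\<lambda>k. v $ (k - 1)) (Suc i)"
proof -
  let ?S = "in_nbrs E (Suc i)"
  let ?r = "real (rho_in E (Suc i))"
  have "(H_mat N E *\<^sub>v v) $ i = (\<Sum>j\<in>{0..<N}. H_mat N E $$ (i, j) * v $ j)"
    using v i H_mat_carrier[of N E] by (simp add: scalar_prod_def)
  also have "\<dots> = (\<Sum>j\<in>{0..<N}. (if Suc i < N \<and> Suc j \<in> ?S then 1 / ?r else 0) * v $ j)"
    using i by (intro sum.cong) (auto simp: H_mat_def)
  also have "\<dots> = nbr_avg N E (\<lambda>k. v $ (k - 1)) (Suc i)"
  proof (cases "Suc i < N")
    case False
    then show ?thesis using i by (simp add: nbr_avg_def)
  next
    case True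
    have "(\<Sum>j\<in>{0..<N}. (if Suc i < N \<and> Suc j \<in> ?S then 1 / ?r else 0) * v $ j)
        = (\<Sum>j\<in>{0..<N}. if Suc j \<in> ?S then v $ j / ?r else 0)"
      using True by (intro sum.cong) auto
    also have "\<dots> = (\<Sum>j\<in>{j \<in> {0..<N}. Suc j \<in> ?S}. v $ j / ?r)"
      by (simp only: sum.inter_filter[OF finite_atLeastLessThan])
    also have "\<dots> = (\<Sum>j\<in>{j \<in> {0..<N}. Suc j \<in> ?S}. v $ (Suc j - 1)) / ?r"
      by (simp add: sum_divide_distrib)
    also have "(\<Sum>j\<in>{j \<in> {0..<N}. Suc j \<in> ?S}. v $ (Suc j - 1)) = (\<Sum>k\<in>?S. v $ (k - 1))"
      by (subst in_nbrs_eq_image_Suc[OF dg, of "Suc i"], subst sum.reindex) auto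
    finally show ?thesis using True unfolding nbr_avg_def by simp
  qed
  finally show ?thesis .
qed

lemma abs_M_mat_solution_le:
  assumes dg: "digraph_on N E" and p: "0 < p" and prox: "uniformly_proximal N E h p"
    and q: "q \<in> carrier_vec N" and sol: "M_mat N E *\<^sub>v q = b"
    and b_le: "\<And>i. i < N \<Longrightarrow> \<bar>b $ i\<bar> \<le> \<beta>" and beta: "0 \<le> \<beta>"
    and i: "i < N"
  shows "\<bar>q $ i\<bar> \<le> real (Suc h) * \<beta> / p"
proof -
  define g where "g k = \<bar>q $ (k - 1)\<bar>" for k
  have sub: "g k \<le> nbr_avg N E g k + \<beta>" if k: "k \<in> {1..N}" for k
  proof -
    obtain j where kj: "k = Suc j" and j: "j < N" using k by (cases k) auto
    have "b $ j = q $ j - (H_mat N E *\<^sub>v q) $ j"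
      unfolding sol[symmetric] M_mat_def
      using q j H_mat_carrier[of N E]
      by (simp add: minus_mult_distrib_mat_vec[OF one_carrier_mat H_mat_carrier q])
    then have "q $ j = nbr_avg N E (\<lambda>k. q $ (k - 1)) k + b $ j"
      using H_mat_mult_vec_nth[OF dg q j] kj by simp
    then have "\<bar>q $ j\<bar> \<le> \<bar>nbr_avg N E (\<lambda>k. q $ (k - 1)) k\<bar> + \<beta>"
      using b_le[OF j] by linarith
    also have "\<bar>nbr_avg N E (\<lambda>k. q $ (k - 1)) k\<bar> \<le> nbr_avg N E g k"
      unfolding g_def by (rule abs_nbr_avg_le)
    finally show ?thesis unfolding g_def kj by simp
  qed
  have "g (Suc i) \<le> real (Suc h) * \<beta> / p"
    using i by (intro subsolution_le_if_uniformly_proximal[OF dg p prox _ sub beta]) (auto simp: g_def)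
  then show ?thesis by (simp add: g_def)
qed

lemma det_M_mat_nonzero:
  assumes dg: "digraph_on N E" and p: "0 < p" and prox: "uniformly_proximal N E h p"
  shows "det (M_mat N E) \<noteq> 0"
proof
  assume "det (M_mat N E) = 0"
  then obtain v where v: "v \<in> carrier_vec N" "v \<noteq> 0\<^sub>v N" "M_mat N E *\<^sub>v v = 0\<^sub>v N"
    using det_0_iff_vec_prod_zero_field[OF M_mat_carrier] by auto
  have "\<bar>v $ i\<bar> \<le> real (Suc h) * 0 / p" if "i < N" for i
    by (rule abs_M_mat_solution_le[OF dg p prox v(1) v(3)]) (use that in auto)
  then have "v = 0\<^sub>v N"
    using v(1) by (intro eq_vecI) auto
  with v(2) show False ..
qed

lemma mat_inv_right_inverse:
  fixes A :: "real mat"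
  assumes A: "A \<in> carrier_mat n n" and det: "det A \<noteq> 0"
  shows "mat_inv n A \<in> carrier_mat n n" and "A * mat_inv n A = 1\<^sub>m n"
proof -
  interpret ring "ring_mat TYPE(real) n ()" by (rule ring_mat)
  have unit: "A \<in> Units (ring_mat TYPE(real) n ())"
    by (rule det_non_zero_imp_unit[OF A det])
  have inv: "mat_inv n A = inv\<^bsub>ring_mat TYPE(real) n ()\<^esub> A"
    unfolding mat_inv_def m_inv_def ring_mat_simps ..
  show "mat_inv n A \<in> carrier_mat n n" "A * mat_inv n A = 1\<^sub>m n"
    using Units_inv_closed[OF unit] Units_r_inv[OF unit] unfolding inv ring_mat_simps by auto
qed

lemma abs_entry_le_mat_sup_entry:
  assumes "i < dim_row A" "j < dim_col A"
  shows "\<bar>A $$ (i, j)\<bar> \<le> mat_sup_entry A"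
proof -
  have "{\<bar>A $$ (i, j)\<bar> | i j. i < dim_row A \<and> j < dim_col A}
      = (\<lambda>(i, j). \<bar>A $$ (i, j)\<bar>) ` ({..<dim_row A} \<times> {..<dim_col A})"
    by auto
  then show ?thesis
    unfolding mat_sup_entry_def using assms by (intro Max_ge) auto
qed

lemma vec_sup_norm_le:
  assumes "0 \<le> C" "\<And>i. i < dim_vec v \<Longrightarrow> \<bar>v $ i\<bar> \<le> C"
  shows "vec_sup_norm v \<le> C"
proof -
  have "{\<bar>v $ i\<bar> | i. i < dim_vec v} = (\<lambda>i. \<bar>v $ i\<bar>) ` {..<dim_vec v}"
    by auto
  then show ?thesis
    unfolding vec_sup_norm_def using assms by (intro Max.boundedI) auto
qed

lemma abs_hadamard_H_mat_row_sum_le: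
  assumes dg: "digraph_on N E" and A: "A \<in> carrier_mat N N" "mat_sup_entry A \<le> 1"
    and i: "i < N"
  shows "\<bar>(hadamard (H_mat N E) A *\<^sub>v vec N (\<lambda>_. 1)) $ i\<bar> \<le> 1"
proof -
  have H_nonneg: "0 \<le> H_mat N E $$ (i, j)" if "j < N" for j
    using i that by (simp add: H_mat_def)
  have "\<bar>(hadamard (H_mat N E) A *\<^sub>v vec N (\<lambda>_. 1)) $ i\<bar>
      = \<bar>\<Sum>j\<in>{0..<N}. H_mat N E $$ (i, j) * A $$ (i, j)\<bar>"
    using H_mat_carrier[of N E] i by (simp add: hadamard_def scalar_prod_def)
  also have "\<dots> \<le> (\<Sum>j\<in>{0..<N}. H_mat N E $$ (i, j) * 1)"
  proof (rule order_trans[OF sum_abs sum_mono])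
    fix j assume j: "j \<in> {0..<N}"
    have "\<bar>A $$ (i, j)\<bar> \<le> 1"
      using abs_entry_le_mat_sup_entry[of i A j] A i j by auto
    then show "\<bar>H_mat N E $$ (i, j) * A $$ (i, j)\<bar> \<le> H_mat N E $$ (i, j) * 1"
      using H_nonneg[of j] j mult_left_mono[of "\<bar>A $$ (i, j)\<bar>" 1 "H_mat N E $$ (i, j)"]
      by (simp add: abs_mult)
  qed
  also have "\<dots> = (H_mat N E *\<^sub>v vec N (\<lambda>_. 1)) $ i"
    using H_mat_carrier[of N E] i by (simp add: scalar_prod_def)
  also have "\<dots> = nbr_avg N E (\<lambda>k. vec N (\<lambda>_. 1) $ (k - 1)) (Suc i)"
    by (rule H_mat_mult_vec_nth[OF dg _ i]) simp
  also have "\<dots> \<le> nbr_avg N E (\<lambda>_. 1) (Suc i)"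
  proof (rule nbr_avg_mono)
    fix k assume "k \<in> in_nbrs E (Suc i)"
    then have "k - 1 < N" using in_nbrs_subset[OF dg] by fastforce
    then show "vec N (\<lambda>_. 1 :: real) $ (k - 1) \<le> 1" by simp
  qed
  also have "\<dots> \<le> 1"
    by (rule nbr_avg_const_le) simp
  finally show ?thesis .
qed

lemma sens_le_if_uniformly_proximal:
  assumes dg: "digraph_on N E" and p: "0 < p" and prox: "uniformly_proximal N E h p"
  shows "sens N E \<le> ereal (real (Suc h) / p)"
  unfolding sens_def
proof (rule SUP_least)
  fix A assume A: "A \<in> {A. A \<in> carrier_mat N N \<and> mat_sup_entry A \<le> 1}"
  define B where "B = mat_inv N (M_mat N E)"
  define b where "b = hadamard (H_mat N E) A *\<^sub>v vec N (\<lambda>_. 1)"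
  have det: "det (M_mat N E) \<noteq> 0"
    by (rule det_M_mat_nonzero[OF dg p prox])
  have B: "B \<in> carrier_mat N N" "M_mat N E * B = 1\<^sub>m N"
    unfolding B_def by (rule mat_inv_right_inverse[OF M_mat_carrier det])+
  have b: "b \<in> carrier_vec N"
    unfolding b_def hadamard_def carrier_vec_def H_mat_def by simp
  have sol: "M_mat N E *\<^sub>v (B *\<^sub>v b) = b"
    using assoc_mult_mat_vec[OF M_mat_carrier B(1) b, symmetric] B(2) b by simp
  have "\<bar>(B *\<^sub>v b) $ i\<bar> \<le> real (Suc h) * 1 / p" if "i < N" for i
    using abs_M_mat_solution_le[OF dg p prox mult_mat_vec_carrier[OF B(1) b] sol _ zero_le_one that]
      abs_hadamard_H_mat_row_sum_le[OF dg] A unfolding b_def by auto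
  then have "vec_sup_norm (B *\<^sub>v b) \<le> real (Suc h) / p"
    using p B(1) by (intro vec_sup_norm_le) auto
  then show "ereal (vec_sup_norm (mat_inv N (M_mat N E) *\<^sub>v
      (hadamard (H_mat N E) A *\<^sub>v vec N (\<lambda>_. 1)))) \<le> ereal (real (Suc h) / p)"
    unfolding B_def[symmetric] b_def[symmetric] by simp
qed

lemma dwalk_hd_eq_last_if_length_le_1: "dwalk E xs \<Longrightarrow> length xs \<le> 1 \<Longrightarrow> hd xs = last xs"
  unfolding dwalk_def by (cases xs) auto

lemma dwalk_snoc:
  assumes "dwalk E xs" "E (last xs) i"
  shows "dwalk E (xs @ [i])" "hd (xs @ [i]) = hd xs"
proof -
  have ne: "xs \<noteq> []" using assms(1) unfolding dwalk_def by simp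
  have "E ((xs @ [i]) ! k) ((xs @ [i]) ! Suc k)" if k: "Suc k < length (xs @ [i])" for k
  proof (cases "Suc k < length xs")
    case True
    then show ?thesis using assms(1) unfolding dwalk_def by (simp add: nth_append)
  next
    case False
    then have "k = length xs - 1" using k by simp
    then show ?thesis using assms(2) ne by (simp add: nth_append last_conv_nth)
  qed
  then show "dwalk E (xs @ [i])" unfolding dwalk_def by simp
  show "hd (xs @ [i]) = hd xs" using ne by simp
qed

lemma dwalk_butlast:
  assumes w: "dwalk E xs" and ne: "hd xs \<noteq> last xs"
  obtains ys where "dwalk E ys" "hd ys = hd xs" "E (last ys) (last xs)"
    "length xs = Suc (length ys)"
proof
  obtain x zs where xs: "xs = zs @ [x]" using w unfolding dwalk_def by (metis rev_exhaust)
  have zs: "zs \<noteq> []" using ne xs by auto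
  have edge: "E (xs ! k) (xs ! Suc k)" if "Suc k < length xs" for k
    using w that unfolding dwalk_def by blast
  show "dwalk E (butlast xs)"
    unfolding dwalk_def
  proof (intro conjI allI impI)
    show "butlast xs \<noteq> []" using zs by (simp add: xs)
    fix k assume "Suc k < length (butlast xs)"
    then show "E (butlast xs ! k) (butlast xs ! Suc k)"
      using edge[of k] by (simp add: xs nth_append)
  qed
  show "hd (butlast xs) = hd xs" using zs by (simp add: xs)
  show "E (last (butlast xs)) (last xs)"
    using edge[of "length zs - 1"] zs by (simp add: xs nth_append last_conv_nth)
  show "length xs = Suc (length (butlast xs))" by (simp add: xs)
qed

lemma dwalk_if_rtranclp: "E\<^sup>*\<^sup>* u v \<Longrightarrow> \<exists>xs. dwalk E xs \<and> hd xs = u \<and> last xs = v"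
proof (induction rule: rtranclp_induct)
  case base
  show ?case by (intro exI[of _ "[u]"]) (simp add: dwalk_def)
next
  case (step v w)
  then obtain xs where "dwalk E xs" "hd xs = u" "last xs = v" by blast
  with step.hyps(2) dwalk_snoc[of E xs w] show ?case by (intro exI[of _ "xs @ [w]"]) auto
qed

lemma reach_prob_ge_one_if_walks_bounded:
  assumes dg: "digraph_on N E" and anc: "\<And>j. j \<in> {1..N} \<Longrightarrow> E\<^sup>*\<^sup>* N j"
  shows "i \<in> {1..N} \<Longrightarrow> (\<forall>xs. dwalk E xs \<and> hd xs = N \<and> last xs = i \<longrightarrow> length xs \<le> Suc h)
    \<Longrightarrow> 1 \<le> reach_prob N E h i"
proof (induction h arbitrary: i)
  case 0
  obtain xs where xs: "dwalk E xs" "hd xs = N" "last xs = i"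
    using dwalk_if_rtranclp[OF anc[OF 0(1)]] by blast
  moreover have "length xs \<le> 1"
    using 0(2) xs by auto
  ultimately have "i = N"
    using dwalk_hd_eq_last_if_length_le_1 by simp
  then show ?case by simp
next
  case (Suc h)
  show ?case
  proof (cases "i = N")
    case True
    then show ?thesis by simp
  next
    case False
    have reach_nbr: "1 \<le> reach_prob N E h j" if j: "j \<in> in_nbrs E i" for j
    proof (rule Suc.IH)
      show "j \<in> {1..N}" using j in_nbrs_subset[OF dg] by blast
      show "\<forall>ys. dwalk E ys \<and> hd ys = N \<and> last ys = j \<longrightarrow> length ys \<le> Suc h"
      proof (intro allI impI)
        fix ys assume ys: "dwalk E ys \<and> hd ys = N \<and> last ys = j"
        then have "E (last ys) i" using j by (simp add: in_nbrs_def)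
        then have "length (ys @ [i]) \<le> Suc (Suc h)"
          using Suc.prems(2)[rule_format, of "ys @ [i]"] dwalk_snoc[of E ys i] ys by simp
        then show "length ys \<le> Suc h" by simp
      qed
    qed
    have "1 = nbr_avg N E (\<lambda>_. 1) i"
      using False rho_in_pos_if_ancestor[OF dg anc[OF Suc.prems(1)] False]
      by (simp add: nbr_avg_const)
    also have "\<dots> \<le> reach_prob N E (Suc h) i"
      unfolding reach_prob_Suc_eq_nbr_avg[OF False] by (rule nbr_avg_mono) (rule reach_nbr)
    finally show ?thesis .
  qed
qed

lemma uniformly_proximal_if_walks_bounded:
  assumes "digraph_on N E" "\<And>j. j \<in> {1..N} \<Longrightarrow> E\<^sup>*\<^sup>* N j"
    and "\<forall>xs. dwalk E xs \<and> hd xs = N \<longrightarrow> length xs \<le> Suc L"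
  shows "uniformly_proximal N E L 1"
  unfolding uniformly_proximal_def
  using assms by (blast intro: reach_prob_ge_one_if_walks_bounded)

lemma reach_prob_ge_if_in_degree_bounded:
  assumes dg: "digraph_on N E" and C: "1 \<le> C"
    and deg: "\<And>i. i \<in> {1..N} \<Longrightarrow> real (rho_in E i) \<le> C"
  shows "dwalk E xs \<Longrightarrow> hd xs = N \<Longrightarrow> last xs = i \<Longrightarrow> i \<in> {1..N} \<Longrightarrow> length xs \<le> Suc h
    \<Longrightarrow> (1 / C) ^ h \<le> reach_prob N E h i"
proof (induction h arbitrary: xs i)
  case 0
  then have "i = N"
    using dwalk_hd_eq_last_if_length_le_1[OF 0(1)] by simp
  then show ?case by simp
next
  case (Suc h)
  show ?case
  proof (cases "i = N")
    case True
    have "(1 / C) ^ Suc h \<le> 1" using C by (intro power_le_one) auto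
    then show ?thesis using True by simp
  next
    case False
    obtain ys where ys: "dwalk E ys" "hd ys = N" "E (last ys) i" "length xs = Suc (length ys)"
      using dwalk_butlast[OF Suc.prems(1)] Suc.prems(2,3) False by metis
    define j where "j = last ys"
    have j: "j \<in> in_nbrs E i" using ys(3) by (simp add: j_def in_nbrs_def)
    have "j \<in> {1..N}" using j in_nbrs_subset[OF dg] by blast
    then have IH: "(1 / C) ^ h \<le> reach_prob N E h j"
      using Suc.IH[OF ys(1,2) j_def[symmetric]] ys(4) Suc.prems(5) by simp
    have rho_pos: "0 < rho_in E i" using rho_in_pos[OF dg ys(3)] .
    have "(1 / C) ^ Suc h = (1 / C) ^ h / C" by simp
    also have "\<dots> \<le> reach_prob N E h j / real (rho_in E i)"
      using IH C deg[OF Suc.prems(4)] rho_pos reach_prob_nonneg[of N E h j]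
      by (intro frac_le) auto
    also have "\<dots> \<le> (\<Sum>k\<in>in_nbrs E i. reach_prob N E h k) / real (rho_in E i)"
      using j finite_in_nbrs[OF dg] by (intro divide_right_mono member_le_sum) (auto simp: reach_prob_nonneg)
    also have "\<dots> = reach_prob N E (Suc h) i" using False by simp
    finally show ?thesis .
  qed
qed

lemma uniformly_proximal_if_in_degree_bounded:
  assumes dg: "digraph_on N E" and diam: "diam_le E D" and anc: "\<And>j. j \<in> {1..N} \<Longrightarrow> E\<^sup>*\<^sup>* N j"
    and C: "1 \<le> C" and deg: "\<And>i. i \<in> {1..N} \<Longrightarrow> real (rho_in E i) \<le> C"
  shows "uniformly_proximal N E D ((1 / C) ^ D)"
  unfolding uniformly_proximal_def
proof
  fix i assume i: "i \<in> {1..N}"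
  then obtain xs where "dwalk E xs" "hd xs = N" "last xs = i" "length xs \<le> Suc D"
    using diam anc[OF i] unfolding diam_le_def by blast
  then show "(1 / C) ^ D \<le> reach_prob N E D i"
    using reach_prob_ge_if_in_degree_bounded[OF dg C deg] i by blast
qed

lemma uniformly_proximal_if_proximal_fraction:
  assumes dg: "digraph_on N E" and anc: "\<And>j. j \<in> {1..N} \<Longrightarrow> E\<^sup>*\<^sup>* N j" and tau: "0 < \<tau>"
    and frac: "\<And>i. i \<in> {1..N} \<Longrightarrow>
        c * real (rho_in E i) \<le> real (card {j \<in> in_nbrs E i. \<tau> \<le> reach_prob N E h j})"
  shows "uniformly_proximal N E (Suc h) (min (c * \<tau>) 1)"
  unfolding uniformly_proximal_def
proof
  fix i assume i: "i \<in> {1..N}"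
  show "min (c * \<tau>) 1 \<le> reach_prob N E (Suc h) i"
  proof (cases "i = N")
    case True
    then show ?thesis by simp
  next
    case False
    define S where "S = {j \<in> in_nbrs E i. \<tau> \<le> reach_prob N E h j}"
    have fin: "finite (in_nbrs E i)" by (rule finite_in_nbrs[OF dg])
    have rho_pos: "0 < rho_in E i" by (rule rho_in_pos_if_ancestor[OF dg anc[OF i] False])
    have "c * \<tau> * real (rho_in E i) \<le> \<tau> * real (card S)"
      using mult_left_mono[OF frac[OF i] less_imp_le[OF tau]] unfolding S_def by (simp add: algebra_simps)
    also have "\<dots> = (\<Sum>j\<in>S. \<tau>)" by simp
    also have "\<dots> \<le> (\<Sum>j\<in>S. reach_prob N E h j)" by (intro sum_mono) (simp add: S_def)
    also have "\<dots> \<le> (\<Sum>j\<in>in_nbrs E i. reach_prob N E h j)"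
      using fin by (intro sum_mono2) (auto simp: S_def reach_prob_nonneg)
    finally have "c * \<tau> \<le> reach_prob N E (Suc h) i"
      using False rho_pos by (simp add: pos_le_divide_eq)
    then show ?thesis by simp
  qed
qed

lemma eventually_uniformly_proximal:
  fixes G :: "nat \<Rightarrow> nat \<Rightarrow> nat \<Rightarrow> bool"
  assumes graph: "\<And>N. N \<ge> 1 \<Longrightarrow> digraph_on N (G N)"
    and bounded_diam: "\<exists>D. \<forall>N\<ge>1. diam_le (G N) D"
    and ancestor: "\<And>N i. N \<ge> 1 \<Longrightarrow> i \<in> {1..N} \<Longrightarrow> (G N)\<^sup>*\<^sup>* N i"
    and conds:
      "(\<exists>L. \<forall>N\<ge>1. \<forall>xs. dwalk (G N) xs \<and> hd xs = N \<longrightarrow> length xs \<le> Suc L)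
       \<or> (\<exists>C. \<forall>N\<ge>1. \<forall>i\<in>{1..N}. rho_in (G N) i \<le> C)
       \<or> (\<exists>c::real. \<exists>\<tau>::real. \<exists>h::nat. \<exists>N0. c > 0 \<and> \<tau> > 0 \<and>
            (\<forall>N\<ge>N0. \<forall>i\<in>{1..N}.
               real (card {j \<in> in_nbrs (G N) i. reach_prob N (G N) h j \<ge> \<tau>})
                 \<ge> c * real (rho_in (G N) i)))"
  obtains h p where "0 < p" "\<forall>\<^sub>F N in sequentially. uniformly_proximal N (G N) h p"
  using conds
proof (elim disjE exE conjE)
  fix L assume L: "\<forall>N\<ge>1. \<forall>xs. dwalk (G N) xs \<and> hd xs = N \<longrightarrow> length xs \<le> Suc L"
  have "\<forall>\<^sub>F N in sequentially. uniformly_proximal N (G N) L 1"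
    using eventually_ge_at_top[of 1]
  proof eventually_elim
    case (elim N)
    show ?case
      by (rule uniformly_proximal_if_walks_bounded[OF graph[OF elim] ancestor[OF elim]
            L[THEN spec, THEN mp, OF elim]])
  qed
  then show thesis by (rule that[rotated]) simp
next
  fix C assume C: "\<forall>N\<ge>1. \<forall>i\<in>{1..N}. rho_in (G N) i \<le> C"
  obtain D where D: "\<forall>N\<ge>1. diam_le (G N) D" using bounded_diam by blast
  let ?C = "max (real C) 1"
  have "\<forall>\<^sub>F N in sequentially. uniformly_proximal N (G N) D ((1 / ?C) ^ D)"
    using eventually_ge_at_top[of 1]
  proof eventually_elim
    case (elim N)
    have deg: "real (rho_in (G N) i) \<le> ?C" if "i \<in> {1..N}" for i
      using C[rule_format, OF elim that] by (simp add: le_max_iff_disj)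
    show ?case
      by (rule uniformly_proximal_if_in_degree_bounded[OF graph[OF elim] D[rule_format, OF elim]
            ancestor[OF elim] max.cobounded2 deg])
  qed
  then show thesis by (rule that[rotated]) simp
next
  fix c \<tau> :: real and h' N0 :: nat
  assume c: "0 < c" and tau: "0 < \<tau>" and frac: "\<forall>N\<ge>N0. \<forall>i\<in>{1..N}.
    c * real (rho_in (G N) i) \<le> real (card {j \<in> in_nbrs (G N) i. \<tau> \<le> reach_prob N (G N) h' j})"
  have "\<forall>\<^sub>F N in sequentially. uniformly_proximal N (G N) (Suc h') (min (c * \<tau>) 1)"
    using eventually_ge_at_top[of "max N0 1"]
  proof eventually_elim
    case (elim N)
    then have N: "1 \<le> N" "N0 \<le> N" by auto
    show ?case
      by (rule uniformly_proximal_if_proximal_fraction[OF graph[OF N(1)] ancestor[OF N(1)] tau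
            frac[rule_format, OF N(2)]])
  qed
  then show thesis by (rule that[rotated]) (use c tau in simp)
qed

theorem proposition3:
  fixes G :: "nat \<Rightarrow> nat \<Rightarrow> nat \<Rightarrow> bool"
  assumes graph: "\<And>N. N \<ge> 1 \<Longrightarrow> digraph_on N (G N)"
    and dag: "\<And>N. N \<ge> 1 \<Longrightarrow> acyclic_graph (G N)"
    and bounded_diam: "\<exists>D. \<forall>N\<ge>1. diam_le (G N) D"
    and ancestor: "\<And>N i. N \<ge> 1 \<Longrightarrow> i \<in> {1..N} \<Longrightarrow> (G N)\<^sup>*\<^sup>* N i"
    and conds:
      "(\<exists>L. \<forall>N\<ge>1. \<forall>xs. dwalk (G N) xs \<and> hd xs = N \<longrightarrow> length xs \<le> Suc L)
       \<or> (\<exists>C. \<forall>N\<ge>1. \<forall>i\<in>{1..N}. rho_in (G N) i \<le> C)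
       \<or> (\<exists>c::real. \<exists>\<tau>::real. \<exists>h::nat. \<exists>N0. c > 0 \<and> \<tau> > 0 \<and>
            (\<forall>N\<ge>N0. \<forall>i\<in>{1..N}.
               real (card {j \<in> in_nbrs (G N) i. reach_prob N (G N) h j \<ge> \<tau>})
                 \<ge> c * real (rho_in (G N) i)))"
  shows "limsup (\<lambda>N. sens N (G N)) < \<infinity>"
proof -
  obtain h p where p: "0 < p" and prox: "\<forall>\<^sub>F N in sequentially. uniformly_proximal N (G N) h p"
    using eventually_uniformly_proximal[OF graph bounded_diam ancestor conds] by blast
  have "\<forall>\<^sub>F N in sequentially. sens N (G N) \<le> ereal (real (Suc h) / p)"
    using prox eventually_ge_at_top[of 1]
  proof eventually_elim
    case (elim N)
    show ?case by (rule sens_le_if_uniformly_proximal[OF graph[OF elim(2)] p elim(1)])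
  qed
  then have "limsup (\<lambda>N. sens N (G N)) \<le> ereal (real (Suc h) / p)"
    by (rule Limsup_bounded)
  then show ?thesis by (rule le_less_trans) simp
qed

end
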